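(* For $d=4$ the set $A(\sigma_\bullet,(2,0))$ is connected, and for $d=5$ the set $A(\sigma_\bullet,(2,1))$ is connected.
   Context: Identify a monic real polynomial $Q_d=x^d+\sum_{j=0}^{d-1}a_jx^j$ with its coefficient vector $(a_{d-1},\ldots,a_0)\in\mathbb{R}^d$. $\sigma_\bullet=(+,-,+,+,\ldots,+,+,-,+)$ denotes the sign pattern of length $d+1$ in which the coefficients of $x^{d-1}$ and $x^1$ are negative and all other coefficients are positive; for $d=4$ it is $(+,-,+,-,+)$ and for $d=5$ it is $(+,-,+,+,-,+)$. $A(\sigma_\bullet,(2,d-4))$ is the set of monic degree-$d$ polynomials with all coefficients non-zero with signs given by $\sigma_\bullet$ (i.e. $\operatorname{sign}(a_j)$ equals the entry of $\sigma_\bullet$ corresponding to $x^j$), having exactly two positive and exactly $d-4$ negative roots, all real roots simple, and exactly one pair of complex conjugate non-real roots. *)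

theory Defs
  imports "HOL-Analysis.Analysis" "HOL-Computational_Algebra.Polynomial"
begin

definition sigma_bullet :: "nat \<Rightarrow> nat \<Rightarrow> real" where
  "sigma_bullet d j = (if j = d - 1 \<or> j = 1 then -1 else 1)"

definition A_set :: "nat \<Rightarrow> (nat \<Rightarrow> real) \<Rightarrow> nat \<Rightarrow> nat \<Rightarrow> real poly set" where
  "A_set d \<sigma> pos neg = {p. degree p = d \<and> lead_coeff p = 1
     \<and> (\<forall>j\<le>d. sgn (coeff p j) = \<sigma> j)
     \<and> card {x::real. x > 0 \<and> poly p x = 0} = pos
     \<and> card {x::real. x < 0 \<and> poly p x = 0} = neg
     \<and> (\<forall>x::real. poly p x = 0 \<longrightarrow> order x p = 1)
     \<and> card {z::complex. Im z \<noteq> 0 \<and> poly (map_poly complex_of_real p) z = 0} = 2}"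

end

theory Submission
  imports Defs
begin

(* Every polynomial in the set factors as (x - a)(x - b)(x^2 + p x + q), resp.
   (x - a)(x - b)(x - m)(x^2 + p x + q), with 0 < a < b, m < 0 and p^2 < 4 q; conversely such
   a product lies in the set as soon as its coefficients have the signs sigma_bullet. So the set
   is the image under a polynomial map of a region of parameters (roots, p, q). For fixed roots
   the coefficients are affine in (p, q), hence the admissible (p, q) form a convex set, and
   every parameter point is joined by a segment to the one with quadratic factor x^2 + 1, resp.
   x^2 + m x + m^2. These points form a connected set, because there the sign pattern holds for
   all admissible roots: the products are (x - a)(x - b)(x^2 + 1) and (x - a)(x - b)(x^3 - m^3). *)

lemma quadratic_poly_pos:
  fixes p q x :: real
  assumes "p\<^sup>2 < 4 * q"
  shows "poly [:q, p, 1:] x > 0"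
proof -
  have "4 * poly [:q, p, 1:] x = (2 * x + p)\<^sup>2 + (4 * q - p\<^sup>2)"
    by (simp add: algebra_simps power2_eq_square)
  moreover have "(2 * x + p)\<^sup>2 + (4 * q - p\<^sup>2) > 0"
    using assms by (simp add: add_nonneg_pos)
  ultimately show ?thesis by linarith
qed

lemma card_nonreal_roots_quadratic:
  fixes p q :: real
  assumes "p\<^sup>2 < 4 * q"
  shows "card {z. Im z \<noteq> 0 \<and> poly (map_poly complex_of_real [:q, p, 1:]) z = 0} = 2"
proof -
  define w where "w = sqrt (4 * q - p\<^sup>2) / 2"
  have "w > 0" using assms by (simp add: w_def)
  have w2: "w\<^sup>2 = q - p\<^sup>2 / 4" using assms by (simp add: w_def power_divide)
  have root_iff: "poly (map_poly complex_of_real [:q, p, 1:]) z = 0 \<longleftrightarrow>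
      (Re z)\<^sup>2 - (Im z)\<^sup>2 + p * Re z + q = 0 \<and> (2 * Re z + p) * Im z = 0" for z
    by (simp add: map_poly_pCons complex_eq_iff power2_eq_square algebra_simps)
  have "{z. Im z \<noteq> 0 \<and> poly (map_poly complex_of_real [:q, p, 1:]) z = 0}
      = {Complex (-p/2) w, Complex (-p/2) (-w)}"
  proof (intro set_eqI iffI)
    fix z assume "z \<in> {z. Im z \<noteq> 0 \<and> poly (map_poly complex_of_real [:q, p, 1:]) z = 0}"
    then have "Im z \<noteq> 0"
      and eqs: "(Re z)\<^sup>2 - (Im z)\<^sup>2 + p * Re z + q = 0" "(2 * Re z + p) * Im z = 0"
      using root_iff by auto
    then have re: "Re z = -p/2" by simp
    then have "(Im z)\<^sup>2 = w\<^sup>2"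
      using eqs(1) unfolding w2 re by (simp add: power2_eq_square field_simps)
    then show "z \<in> {Complex (-p/2) w, Complex (-p/2) (-w)}"
      using re by (auto simp: power2_eq_iff complex_eq_iff)
  qed (use \<open>w > 0\<close> w2 in \<open>auto simp: root_iff power2_eq_square field_simps\<close>)
  moreover have "Complex (-p/2) w \<noteq> Complex (-p/2) (-w)" using \<open>w > 0\<close> by simp
  ultimately show ?thesis by simp
qed

lemma monic_quadratic_without_real_roots:
  fixes R :: "real poly"
  assumes "degree R = 2" "lead_coeff R = 1" "\<And>x. poly R x \<noteq> 0"
  obtains p q where "R = [:q, p, 1:]" "p\<^sup>2 < 4 * q"
proof
  show R: "R = [:coeff R 0, coeff R 1, 1:]"
  proof (rule poly_eqI)
    fix n
    show "coeff R n = coeff [:coeff R 0, coeff R 1, 1:] n"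
      using assms(1,2) by (cases "n \<le> 2") (auto simp: coeff_eq_0 le_Suc_eq numeral_eq_Suc)
  qed
  show "(coeff R 1)\<^sup>2 < 4 * coeff R 0"
  proof (rule ccontr)
    assume "\<not> (coeff R 1)\<^sup>2 < 4 * coeff R 0"
    then have "poly R ((sqrt ((coeff R 1)\<^sup>2 - 4 * coeff R 0) - coeff R 1) / 2) = 0"
      by (subst R) (simp add: algebra_simps power2_eq_square field_simps)
    with assms(3) show False by blast
  qed
qed

lemma prod_linear_factors_dvd:
  fixes P :: "'a::idom poly"
  assumes "finite Z" "\<And>r. r \<in> Z \<Longrightarrow> poly P r = 0"
  shows "(\<Prod>r\<in>Z. [:-r, 1:]) dvd P"
  using assms
proof (induction Z rule: finite_induct)
  case empty
  then show ?case by simp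
next
  case (insert r Z)
  have "(\<Prod>s\<in>Z. [:-s, 1:]) dvd P"
    by (rule insert.IH) (simp add: insert.prems)
  then obtain Q where Q: "P = (\<Prod>s\<in>Z. [:-s, 1:]) * Q"
    by (rule dvdE)
  have "poly (\<Prod>s\<in>Z. [:-s, 1:]) r \<noteq> 0"
    using insert.hyps by (simp add: poly_prod)
  moreover have "poly P r = 0"
    using insert.prems by simp
  ultimately have "poly Q r = 0"
    by (simp add: Q)
  then have "[:-r, 1:] dvd Q"
    by (simp add: poly_eq_0_iff_dvd)
  then have "(\<Prod>s\<in>Z. [:-s, 1:]) * [:-r, 1:] dvd P"
    unfolding Q by (rule mult_dvd_mono[OF dvd_refl])
  then show ?case
    unfolding prod.insert[OF insert.hyps] mult.commute[of "[:-r, 1:]"] .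
qed

lemma order_prod_linear_factors:
  fixes x :: "'a::idom"
  assumes "finite Z" "x \<in> Z"
  shows "order x (\<Prod>r\<in>Z. [:-r, 1:]) = 1"
proof -
  have split: "(\<Prod>r\<in>Z. [:-r, 1:]) = [:-x, 1:] * (\<Prod>r\<in>Z - {x}. [:-r, 1:])"
    using assms by (simp add: prod.remove)
  have "poly (\<Prod>r\<in>Z - {x}. [:-r, 1:]) x \<noteq> 0"
    using assms by (simp add: poly_prod)
  then have "order x (\<Prod>r\<in>Z - {x}. [:-r, 1:]) = 0"
    by (rule order_0I)
  moreover have "order x [:-x, 1:] = 1"
    using order_power_n_n[of x 1] by simp
  moreover have nonzero: "[:-x, 1:] * (\<Prod>r\<in>Z - {x}. [:-r, 1:]) \<noteq> 0"
    using \<open>poly (\<Prod>r\<in>Z - {x}. [:-r, 1:]) x \<noteq> 0\<close> by (intro no_zero_divisors) auto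
  ultimately show ?thesis
    unfolding split order_mult[OF nonzero] by simp
qed

lemma degree_prod_linear_factors:
  fixes Z :: "'a::idom set"
  shows "degree (\<Prod>r\<in>Z. [:-r, 1:]) = card Z"
  by (subst degree_prod_sum_eq) auto

lemma lead_coeff_prod_linear_factors:
  fixes Z :: "'a::idom set"
  shows "lead_coeff (\<Prod>r\<in>Z. [:-r, 1:]) = 1"
  by (simp add: lead_coeff_prod)

lemma prod_linear_factors_2:
  fixes a b :: "'a::idom"
  assumes "a \<noteq> b"
  shows "(\<Prod>r\<in>{a, b}. [:-r, 1:]) = [:-a, 1:] * [:-b, 1:]"
  using assms by (simp del: mult_pCons_left mult_pCons_right)

lemma prod_linear_factors_3:
  fixes a b m :: "'a::idom"
  assumes "a \<noteq> b" "a \<noteq> m" "b \<noteq> m"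
  shows "(\<Prod>r\<in>{a, b, m}. [:-r, 1:]) = [:-a, 1:] * [:-b, 1:] * [:-m, 1:]"
  using assms by (simp add: mult.assoc del: mult_pCons_left mult_pCons_right)

lemma map_poly_of_real_mult:
  fixes p q :: "real poly"
  shows "map_poly (of_real :: real \<Rightarrow> 'a::{comm_ring_1, real_algebra_1}) (p * q)
       = map_poly of_real p * map_poly of_real q"
  by (simp add: poly_eq_iff coeff_map_poly coeff_mult)

lemma map_poly_of_real_prod:
  fixes f :: "'b \<Rightarrow> real poly"
  shows "map_poly (of_real :: real \<Rightarrow> 'a::{comm_ring_1, real_algebra_1}) (\<Prod>r\<in>Z. f r)
       = (\<Prod>r\<in>Z. map_poly of_real (f r))"
  by (induction Z rule: infinite_finite_induct) (simp_all add: map_poly_of_real_mult)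

lemma roots_prod_linear_factors_mult_quadratic:
  fixes Z :: "real set" and p q :: real
  defines "P \<equiv> (\<Prod>r\<in>Z. [:-r, 1:]) * [:q, p, 1:]"
  assumes "finite Z" "p\<^sup>2 < 4 * q"
  shows "{x. poly P x = 0} = Z"
    and "\<And>x. poly P x = 0 \<Longrightarrow> order x P = 1"
    and "card {z. Im z \<noteq> 0 \<and> poly (map_poly complex_of_real P) z = 0} = 2"
proof -
  have quad: "poly [:q, p, 1:] x \<noteq> 0" for x
    using quadratic_poly_pos[OF assms(3)] by (metis less_irrefl)
  have poly_P: "poly P x = (\<Prod>r\<in>Z. x - r) * poly [:q, p, 1:] x" for x
    unfolding P_def poly_mult poly_prod by simp
  show roots: "{x. poly P x = 0} = Z"
    using quad assms(2) by (auto simp only: poly_P mult_eq_0_iff) auto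
  show "order x P = 1" if "poly P x = 0" for x
  proof -
    have "x \<in> Z" using roots that by blast
    moreover have "order x [:q, p, 1:] = 0"
      using quad by (rule order_0I)
    moreover have "P \<noteq> 0"
      unfolding P_def using assms(2) by (intro no_zero_divisors) (auto simp: prod_zero_iff)
    ultimately show ?thesis
      unfolding P_def order_mult[OF \<open>P \<noteq> 0\<close>[unfolded P_def]] using assms(2)
      by (simp add: order_prod_linear_factors)
  qed
  have "poly (map_poly complex_of_real (\<Prod>r\<in>Z. [:-r, 1:])) z \<noteq> 0" if "Im z \<noteq> 0" for z
    using that assms(2) by (auto simp: map_poly_of_real_prod poly_prod map_poly_pCons)
  then have "poly (map_poly complex_of_real P) z = 0 \<longleftrightarrow>
      poly (map_poly complex_of_real [:q, p, 1:]) z = 0" if "Im z \<noteq> 0" for z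
    using that unfolding P_def map_poly_of_real_mult poly_mult mult_eq_0_iff by blast
  then have "{z. Im z \<noteq> 0 \<and> poly (map_poly complex_of_real P) z = 0}
      = {z. Im z \<noteq> 0 \<and> poly (map_poly complex_of_real [:q, p, 1:]) z = 0}"
    by blast
  then show "card {z. Im z \<noteq> 0 \<and> poly (map_poly complex_of_real P) z = 0} = 2"
    using card_nonreal_roots_quadratic[OF assms(3)] by simp
qed

lemma factor_simple_roots:
  fixes P :: "'a::idom poly"
  assumes "P \<noteq> 0" "\<And>x. poly P x = 0 \<Longrightarrow> order x P = 1"
  obtains R where "P = (\<Prod>r\<in>{x. poly P x = 0}. [:-r, 1:]) * R" "\<And>x. poly R x \<noteq> 0"
proof -
  define Z where "Z = {x. poly P x = 0}"
  have "finite Z"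
    unfolding Z_def using assms(1) by (rule poly_roots_finite)
  then have "(\<Prod>r\<in>Z. [:-r, 1:]) dvd P"
    by (rule prod_linear_factors_dvd) (simp add: Z_def)
  then obtain R where R: "P = (\<Prod>r\<in>Z. [:-r, 1:]) * R"
    by (rule dvdE)
  have "poly R x \<noteq> 0" for x
  proof
    assume "poly R x = 0"
    then have "poly P x = 0" by (simp add: R)
    then have "x \<in> Z" by (simp add: Z_def)
    have "R \<noteq> 0" using assms(1) R by auto
    then have "order x R \<noteq> 0" using \<open>poly R x = 0\<close> by (simp add: order_root)
    have "order x P = order x (\<Prod>r\<in>Z. [:-r, 1:]) + order x R"
      using assms(1) unfolding R by (rule order_mult)
    also have "\<dots> = 1 + order x R"
      using \<open>finite Z\<close> \<open>x \<in> Z\<close> by (simp add: order_prod_linear_factors)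
    finally show False
      using assms(2)[OF \<open>poly P x = 0\<close>] \<open>order x R \<noteq> 0\<close> by simp
  qed
  then show ?thesis
    using that R unfolding Z_def by blast
qed

lemma nonzero_set_eq_pos_Un_neg:
  fixes Z :: "'a::linordered_idom set"
  assumes "0 \<notin> Z"
  shows "Z = {r\<in>Z. 0 < r} \<union> {r\<in>Z. r < 0}"
proof -
  have "0 < r \<or> r < 0" if "r \<in> Z" for r
    using assms that by (cases r rule: linorder_cases) auto
  then show ?thesis
    by auto
qed

lemma card_eq_card_pos_plus_card_neg:
  fixes Z :: "'a::linordered_idom set"
  assumes "finite Z" "0 \<notin> Z"
  shows "card Z = card {r\<in>Z. 0 < r} + card {r\<in>Z. r < 0}"
proof -
  have "card Z = card ({r\<in>Z. 0 < r} \<union> {r\<in>Z. r < 0})"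
    using nonzero_set_eq_pos_Un_neg[OF assms(2)] by (rule arg_cong)
  also have "\<dots> = card {r\<in>Z. 0 < r} + card {r\<in>Z. r < 0}"
    using assms(1) by (intro card_Un_disjoint) auto
  finally show ?thesis .
qed

lemma card_2_obtain_ordered:
  fixes S :: "'a::linorder set"
  assumes "card S = 2"
  obtains a b where "a < b" "S = {a, b}"
proof -
  obtain x y where "S = {x, y}" "x \<noteq> y"
    using assms by (auto simp: card_2_iff)
  then show ?thesis
    using that by (cases x y rule: linorder_cases) (auto simp: insert_commute)
qed

lemma prod_linear_factors_mult_quadratic_in_A_set:
  fixes Z :: "real set"
  assumes "finite Z" "0 \<notin> Z" "p\<^sup>2 < 4 * q"
    and "card {r\<in>Z. 0 < r} = pos" "card {r\<in>Z. r < 0} = neg" "d = pos + neg + 2"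
    and "\<forall>j\<le>d. sgn (coeff ((\<Prod>r\<in>Z. [:-r, 1:]) * [:q, p, 1:]) j) = \<sigma> j"
  shows "(\<Prod>r\<in>Z. [:-r, 1:]) * [:q, p, 1:] \<in> A_set d \<sigma> pos neg"
proof -
  define P where "P = (\<Prod>r\<in>Z. [:-r, 1:]) * [:q, p, 1:]"
  note roots = roots_prod_linear_factors_mult_quadratic[OF assms(1,3), folded P_def]
  have "degree P = card Z + 2"
    unfolding P_def using assms(1)
    by (subst degree_mult_eq) (auto simp: degree_prod_linear_factors prod_zero_iff)
  then have "degree P = d"
    using assms(4-6) card_eq_card_pos_plus_card_neg[OF assms(1,2)] by simp
  moreover have "lead_coeff P = 1"
    unfolding P_def lead_coeff_mult lead_coeff_prod_linear_factors by simp
  moreover have "{x. 0 < x \<and> poly P x = 0} = {r\<in>Z. 0 < r}"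
    and "{x. x < 0 \<and> poly P x = 0} = {r\<in>Z. r < 0}"
    using roots(1) by auto
  ultimately show ?thesis
    using assms(4,5,7) roots(2,3) unfolding A_set_def mem_Collect_eq P_def[symmetric]
    by (intro conjI) simp_all
qed

lemma A_set_factorization:
  assumes "P \<in> A_set d \<sigma> pos neg" "\<sigma> 0 \<noteq> 0" "d = pos + neg + 2"
  obtains Z p q where "finite Z" "0 \<notin> Z" "card {r\<in>Z. 0 < r} = pos" "card {r\<in>Z. r < 0} = neg"
    "p\<^sup>2 < 4 * q" "P = (\<Prod>r\<in>Z. [:-r, 1:]) * [:q, p, 1:]"
proof -
  define Z where "Z = {x. poly P x = 0}"
  have deg: "degree P = d" and monic: "lead_coeff P = 1"
    and sgn0: "sgn (coeff P 0) = \<sigma> 0"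
    and pos: "card {x. 0 < x \<and> poly P x = 0} = pos"
    and neg: "card {x. x < 0 \<and> poly P x = 0} = neg"
    and simple: "\<And>x. poly P x = 0 \<Longrightarrow> order x P = 1"
    using assms(1) unfolding A_set_def by auto
  have "P \<noteq> 0" using monic by auto
  then obtain R where factored: "P = (\<Prod>r\<in>Z. [:-r, 1:]) * R"
    and no_roots: "\<And>x. poly R x \<noteq> 0"
    using factor_simple_roots[OF _ simple] unfolding Z_def by blast
  have "finite Z"
    unfolding Z_def using \<open>P \<noteq> 0\<close> by (rule poly_roots_finite)
  have "0 \<notin> Z"
    using sgn0 assms(2) by (auto simp: Z_def poly_0_coeff_0)
  have "{r\<in>Z. 0 < r} = {x. 0 < x \<and> poly P x = 0}"
    and "{r\<in>Z. r < 0} = {x. x < 0 \<and> poly P x = 0}"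
    by (auto simp: Z_def)
  then have card_pos: "card {r\<in>Z. 0 < r} = pos" and card_neg: "card {r\<in>Z. r < 0} = neg"
    using pos neg by simp_all
  have "(\<Prod>r\<in>Z. [:-r, 1:]) \<noteq> 0" "R \<noteq> 0"
    using \<open>P \<noteq> 0\<close> factored by auto
  then have "degree P = card Z + degree R"
    unfolding factored degree_prod_linear_factors[symmetric] by (rule degree_mult_eq)
  then have "degree R = 2"
    using deg assms(3) card_pos card_neg
      card_eq_card_pos_plus_card_neg[OF \<open>finite Z\<close> \<open>0 \<notin> Z\<close>]
    by simp
  moreover have "lead_coeff R = 1"
    using monic unfolding factored lead_coeff_mult lead_coeff_prod_linear_factors by simp
  ultimately obtain p q where "R = [:q, p, 1:]" "p\<^sup>2 < 4 * q"
    using no_roots by (rule monic_quadratic_without_real_roots)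
  then show ?thesis
    using that \<open>finite Z\<close> \<open>0 \<notin> Z\<close> card_pos card_neg factored by blast
qed

lemma sgn_convex_combination:
  fixes x y u :: real
  assumes "sgn x = s" "sgn y = s" "0 \<le> u" "u \<le> 1"
  shows "sgn ((1 - u) * x + u * y) = s"
proof -
  consider "0 < x" "0 < y" | "x = 0" "y = 0" | "x < 0" "y < 0"
    using assms(1,2) by (auto simp: sgn_if split: if_splits)
  then show ?thesis
  proof cases
    case 1
    have "(1 - u) * (- x) + u * (- y) < 0"
      using 1 assms(3,4) by (intro convex_bound_lt) auto
    then show ?thesis using 1 assms(1) by simp
  next
    case 2
    then show ?thesis using assms(1) by simp
  next
    case 3
    have "(1 - u) * x + u * y < 0"
      using 3 assms(3,4) by (intro convex_bound_lt) auto
    then show ?thesis using 3 assms(1) by simp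
  qed
qed

lemma discriminant_convex_combination:
  fixes p1 p2 q1 q2 u :: real
  assumes "p1\<^sup>2 < 4 * q1" "p2\<^sup>2 < 4 * q2" "0 \<le> u" "u \<le> 1"
  shows "((1 - u) * p1 + u * p2)\<^sup>2 < 4 * ((1 - u) * q1 + u * q2)"
proof -
  have "((1 - u) * p1 + u * p2)\<^sup>2 \<le> (1 - u) * p1\<^sup>2 + u * p2\<^sup>2"
    using convex_onD[OF convex_power2, of u p1 p2] assms(3,4) by simp
  moreover have "(1 - u) * (p1\<^sup>2 - 4 * q1) + u * (p2\<^sup>2 - 4 * q2) < 0"
    using assms by (intro convex_bound_lt) auto
  ultimately show ?thesis
    by (simp add: algebra_simps)
qed

lemma mult_quadratic_convex_combination:
  fixes F :: "'a::comm_ring_1 poly"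
  shows "F * [:(1 - u) * q1 + u * q2, (1 - u) * p1 + u * p2, 1:]
       = smult (1 - u) (F * [:q1, p1, 1:]) + smult u (F * [:q2, p2, 1:])"
proof -
  have "[:(1 - u) * q1 + u * q2, (1 - u) * p1 + u * p2, 1:]
      = smult (1 - u) [:q1, p1, 1:] + smult u [:q2, p2, 1:]"
    by simp
  then show ?thesis
    by (simp only: distrib_left mult_smult_right)
qed

lemma sign_pattern_mult_quadratic_convex:
  fixes F :: "real poly"
  assumes "\<forall>j\<le>d. sgn (coeff (F * [:q1, p1, 1:]) j) = \<sigma> j"
    and "\<forall>j\<le>d. sgn (coeff (F * [:q2, p2, 1:]) j) = \<sigma> j"
    and "0 \<le> u" "u \<le> 1"
  shows "\<forall>j\<le>d. sgn (coeff (F * [:(1 - u) * q1 + u * q2, (1 - u) * p1 + u * p2, 1:]) j) = \<sigma> j"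
  unfolding mult_quadratic_convex_combination coeff_add coeff_smult
  using assms sgn_convex_combination by blast

lemma connected_if_connected_component_meets:
  fixes S K :: "'a::topological_space set"
  assumes "connected K" "K \<subseteq> S" "\<And>y. y \<in> S \<Longrightarrow> \<exists>k\<in>K. connected_component S y k"
  shows "connected S"
  unfolding connected_iff_connected_component
proof (intro ballI)
  fix x y assume "x \<in> S" "y \<in> S"
  then obtain kx ky where "kx \<in> K" "connected_component S x kx" "ky \<in> K" "connected_component S y ky"
    using assms(3) by blast
  moreover have "connected_component S kx ky"
    using assms(1,2) \<open>kx \<in> K\<close> \<open>ky \<in> K\<close> by (rule connected_componentI)
  ultimately show "connected_component S x y"
    by (meson connected_component_sym connected_component_trans)
qed

definition quadratic_factor_params ::
    "'r set \<Rightarrow> ('r \<Rightarrow> real poly) \<Rightarrow> nat \<Rightarrow> (nat \<Rightarrow> real) \<Rightarrow> ('r \<times> real \<times> real) set" where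
  "quadratic_factor_params R F d \<sigma> = {(r, p, q). r \<in> R \<and> p\<^sup>2 < 4 * q \<and>
     (\<forall>j\<le>d. sgn (coeff (F r * [:q, p, 1:]) j) = \<sigma> j)}"

lemma quadratic_factor_params_iff:
  "(r, p, q) \<in> quadratic_factor_params R F d \<sigma> \<longleftrightarrow>
     r \<in> R \<and> p\<^sup>2 < 4 * q \<and> (\<forall>j\<le>d. sgn (coeff (F r * [:q, p, 1:]) j) = \<sigma> j)"
  unfolding quadratic_factor_params_def by (simp only: mem_Collect_eq prod.case)

lemma connected_quadratic_factor_params:
  fixes F :: "'r::topological_space \<Rightarrow> real poly" and core :: "'r \<Rightarrow> real \<times> real"
  assumes "connected R" "continuous_on R core"
    and core_in: "\<And>r. r \<in> R \<Longrightarrow> (r, core r) \<in> quadratic_factor_params R F d \<sigma>"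
  shows "connected (quadratic_factor_params R F d \<sigma>)"
proof (rule connected_if_connected_component_meets)
  let ?T = "quadratic_factor_params R F d \<sigma>"
  let ?K = "(\<lambda>r. (r, core r)) ` R"
  show "connected ?K"
    using assms(1,2) by (intro connected_continuous_image continuous_intros)
  show "?K \<subseteq> ?T"
    using core_in by auto
  show "\<exists>k\<in>?K. connected_component ?T y k" if "y \<in> ?T" for y
  proof -
    obtain r p q where y: "y = (r, p, q)"
      by (cases y) auto
    obtain p' q' where core: "core r = (p', q')"
      by fastforce
    have "r \<in> R"
      using that by (simp add: y quadratic_factor_params_iff)
    define g where "g u = (r, (1 - u) * p + u * p', (1 - u) * q + u * q')" for u :: real
    have "g u \<in> ?T" if "0 \<le> u" "u \<le> 1" for u
      using \<open>y \<in> ?T\<close> core_in[OF \<open>r \<in> R\<close>] \<open>r \<in> R\<close>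
        discriminant_convex_combination[OF _ _ that] sign_pattern_mult_quadratic_convex[OF _ _ that]
      unfolding g_def y core quadratic_factor_params_iff by blast
    moreover have "connected (g ` {0..1})"
      unfolding g_def by (intro connected_continuous_image connected_Icc continuous_intros)
    moreover have "y \<in> g ` {0..1}"
      by (rule image_eqI[of _ _ 0]) (simp_all add: g_def y)
    moreover have "(r, core r) \<in> g ` {0..1}"
      by (rule image_eqI[of _ _ 1]) (simp_all add: g_def core)
    ultimately have "connected_component ?T y (r, core r)"
      by (intro connected_componentI[of "g ` {0..1}"]) auto
    then show ?thesis
      using \<open>r \<in> R\<close> by blast
  qed
qed

definition quartic_params :: "((real \<times> real) \<times> real \<times> real) set" where
  "quartic_params = quadratic_factor_params {(a, b). 0 < a \<and> a < b}
     (\<lambda>(a, b). [:-a, 1:] * [:-b, 1:]) 4 (sigma_bullet 4)"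

definition quartic_coeffs ::
    "(real \<times> real) \<times> real \<times> real \<Rightarrow> real \<times> real \<times> real \<times> real" where
  "quartic_coeffs = (\<lambda>((a, b), p, q).
     (p - (a + b), q - (a + b) * p + a * b, a * b * p - (a + b) * q, a * b * q))"

lemma quartic_params_iff:
  "((a, b), p, q) \<in> quartic_params \<longleftrightarrow> 0 < a \<and> a < b \<and> p\<^sup>2 < 4 * q \<and>
     (\<forall>j\<le>4. sgn (coeff ([:-a, 1:] * [:-b, 1:] * [:q, p, 1:]) j) = sigma_bullet 4 j)"
  unfolding quartic_params_def quadratic_factor_params_iff
  by (simp only: mem_Collect_eq prod.case conj_assoc)

lemma quartic_product_eq_iff:
  "[:-a, 1:] * [:-b, 1:] * [:q, p, 1:] = [:a0, a1, a2, a3, 1:]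
     \<longleftrightarrow> quartic_coeffs ((a, b), p, q) = (a3, a2, a1, a0)"
  by (auto simp: quartic_coeffs_def algebra_simps)

lemma sigma_bullet_4_iff:
  "(\<forall>j\<le>4. sgn (coeff [:a0, a1, a2, a3, 1:] j) = sigma_bullet 4 j)
     \<longleftrightarrow> a3 < 0 \<and> 0 < a2 \<and> a1 < 0 \<and> 0 < a0"
  by (simp add: sigma_bullet_def sgn_if numeral_eq_Suc le_Suc_eq all_conj_distrib)

lemma quartic_core_in_params:
  assumes "0 < a" "a < b"
  shows "((a, b), 0, 1) \<in> quartic_params"
proof -
  have "quartic_coeffs ((a, b), 0, 1) = (- (a + b), a * b + 1, - (a + b), a * b)"
    by (simp add: quartic_coeffs_def)
  then have product:
      "[:-a, 1:] * [:-b, 1:] * [:1, 0, 1:] = [:a * b, - (a + b), a * b + 1, - (a + b), 1:]"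
    by (simp only: quartic_product_eq_iff)
  show ?thesis
    unfolding quartic_params_iff product sigma_bullet_4_iff
    using assms by (simp add: add_pos_pos)
qed

lemma connected_quartic_params: "connected quartic_params"
  unfolding quartic_params_def
proof (rule connected_quadratic_factor_params)
  have "{(a, b). 0 < a \<and> a < b} = (\<lambda>(a, d). (a, a + d)) ` ({0::real<..} \<times> {0::real<..})"
    by (auto intro!: image_eqI[of _ _ "(a, b - a)" for a b])
  then show "connected {(a::real, b::real). 0 < a \<and> a < b}"
    unfolding split_def
    by (simp only:) (intro connected_continuous_image connected_Times connected_Ioi continuous_intros)
  show "continuous_on {(a, b). 0 < a \<and> a < b} (\<lambda>_. (0::real, 1::real))"
    by (rule continuous_on_const)
  show "(r, 0, 1) \<in> quadratic_factor_params {(a, b). 0 < a \<and> a < b}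
      (\<lambda>(a, b). [:-a, 1:] * [:-b, 1:]) 4 (sigma_bullet 4)" if "r \<in> {(a, b). 0 < a \<and> a < b}" for r
    using that quartic_core_in_params unfolding quartic_params_def by (cases r) simp
qed

lemma quartic_params_of_A_set:
  assumes "[:a0, a1, a2, a3, 1:] \<in> A_set 4 (sigma_bullet 4) 2 0"
  obtains a b p q
  where "((a, b), p, q) \<in> quartic_params" "quartic_coeffs ((a, b), p, q) = (a3, a2, a1, a0)"
proof -
  have "sigma_bullet 4 0 \<noteq> 0"
    by (simp add: sigma_bullet_def)
  then obtain Z p q where "finite Z" "0 \<notin> Z" and card_pos: "card {r\<in>Z. 0 < r} = 2"
    and card_neg: "card {r\<in>Z. r < 0} = 0" and "p\<^sup>2 < 4 * q"
    and factored: "[:a0, a1, a2, a3, 1:] = (\<Prod>r\<in>Z. [:-r, 1:]) * [:q, p, 1:]"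
    by (rule A_set_factorization[OF assms]) simp
  obtain a b where "a < b" and pos: "{r\<in>Z. 0 < r} = {a, b}"
    using card_2_obtain_ordered[OF card_pos] .
  have neg: "{r\<in>Z. r < 0} = {}"
    using card_neg \<open>finite Z\<close> by simp
  have "Z = {a, b}"
    using nonzero_set_eq_pos_Un_neg[OF \<open>0 \<notin> Z\<close>, unfolded pos neg] by simp
  have "0 < a"
    using pos by blast
  have product: "[:-a, 1:] * [:-b, 1:] * [:q, p, 1:] = [:a0, a1, a2, a3, 1:]"
    unfolding factored \<open>Z = {a, b}\<close> using \<open>a < b\<close>
    by (subst prod_linear_factors_2) auto
  have "\<forall>j\<le>4. sgn (coeff [:a0, a1, a2, a3, 1:] j) = sigma_bullet 4 j"
    using assms unfolding A_set_def by blast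
  then have "((a, b), p, q) \<in> quartic_params"
    unfolding quartic_params_iff product
    using \<open>0 < a\<close> \<open>a < b\<close> \<open>p\<^sup>2 < 4 * q\<close> by blast
  moreover have "quartic_coeffs ((a, b), p, q) = (a3, a2, a1, a0)"
    using product unfolding quartic_product_eq_iff .
  ultimately show ?thesis
    by (rule that)
qed

lemma A_set_of_quartic_params:
  assumes "((a, b), p, q) \<in> quartic_params"
    and "quartic_coeffs ((a, b), p, q) = (a3, a2, a1, a0)"
  shows "[:a0, a1, a2, a3, 1:] \<in> A_set 4 (sigma_bullet 4) 2 0"
proof -
  have "0 < a" "a < b" "p\<^sup>2 < 4 * q"
    and signs: "\<forall>j\<le>4. sgn (coeff ([:-a, 1:] * [:-b, 1:] * [:q, p, 1:]) j) = sigma_bullet 4 j"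
    using assms(1) by (simp_all add: quartic_params_iff)
  then have product: "(\<Prod>r\<in>{a, b}. [:-r, 1:]) = [:-a, 1:] * [:-b, 1:]"
    by (intro prod_linear_factors_2) auto
  have "{r\<in>{a, b}. 0 < r} = {a, b}" "{r\<in>{a, b}. r < 0} = {}"
    using \<open>0 < a\<close> \<open>a < b\<close> by auto
  then have "card {r\<in>{a, b}. 0 < r} = 2" "card {r\<in>{a, b}. r < 0} = 0"
    using \<open>a < b\<close> by simp_all
  then have "(\<Prod>r\<in>{a, b}. [:-r, 1:]) * [:q, p, 1:] \<in> A_set 4 (sigma_bullet 4) 2 0"
    using \<open>0 < a\<close> \<open>a < b\<close> \<open>p\<^sup>2 < 4 * q\<close> signs[folded product]
    by (intro prod_linear_factors_mult_quadratic_in_A_set) auto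
  then show ?thesis
    using assms(2) unfolding product quartic_product_eq_iff[symmetric] by simp
qed

lemma quartic_set_eq:
  "{(a3, a2, a1, a0). [:a0, a1, a2, a3, 1:] \<in> A_set 4 (sigma_bullet 4) 2 0}
     = quartic_coeffs ` quartic_params" (is "?S = _")
proof (intro equalityI subsetI)
  fix t assume "t \<in> ?S"
  then obtain a3 a2 a1 a0 where "t = (a3, a2, a1, a0)" "[:a0, a1, a2, a3, 1:] \<in> A_set 4 (sigma_bullet 4) 2 0"
    by auto
  then show "t \<in> quartic_coeffs ` quartic_params"
    by (metis quartic_params_of_A_set image_eqI)
next
  fix t assume "t \<in> quartic_coeffs ` quartic_params"
  then obtain a b p q where "((a, b), p, q) \<in> quartic_params" "t = quartic_coeffs ((a, b), p, q)"
    by auto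
  moreover obtain a3 a2 a1 a0 where "quartic_coeffs ((a, b), p, q) = (a3, a2, a1, a0)"
    by (cases "quartic_coeffs ((a, b), p, q)") auto
  ultimately show "t \<in> ?S"
    using A_set_of_quartic_params by auto
qed

lemma connected_quartic_set:
  "connected {(a3, a2, a1, a0). [:a0, a1, a2, a3, 1:] \<in> A_set 4 (sigma_bullet 4) 2 0}"
  unfolding quartic_set_eq
proof (rule connected_continuous_image)
  show "continuous_on quartic_params quartic_coeffs"
    unfolding quartic_coeffs_def split_def by (intro continuous_intros)
qed (rule connected_quartic_params)

definition quintic_params :: "((real \<times> real \<times> real) \<times> real \<times> real) set" where
  "quintic_params = quadratic_factor_params {(a, b, m). 0 < a \<and> a < b \<and> m < 0}
     (\<lambda>(a, b, m). [:-a, 1:] * [:-b, 1:] * [:-m, 1:]) 5 (sigma_bullet 5)"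

definition quintic_coeffs ::
    "(real \<times> real \<times> real) \<times> real \<times> real \<Rightarrow> real \<times> real \<times> real \<times> real \<times> real" where
  "quintic_coeffs = (\<lambda>((a, b, m), p, q).
     (p - (a + b + m),
      q - (a + b + m) * p + (a * b + a * m + b * m),
      (a * b + a * m + b * m) * p - (a + b + m) * q - a * b * m,
      (a * b + a * m + b * m) * q - a * b * m * p,
      - a * b * m * q))"

lemma quintic_params_iff:
  "((a, b, m), p, q) \<in> quintic_params \<longleftrightarrow> 0 < a \<and> a < b \<and> m < 0 \<and> p\<^sup>2 < 4 * q \<and>
     (\<forall>j\<le>5. sgn (coeff ([:-a, 1:] * [:-b, 1:] * [:-m, 1:] * [:q, p, 1:]) j) = sigma_bullet 5 j)"
  unfolding quintic_params_def quadratic_factor_params_iff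
  by (simp only: mem_Collect_eq prod.case conj_assoc)

lemma quintic_product_eq_iff:
  "[:-a, 1:] * [:-b, 1:] * [:-m, 1:] * [:q, p, 1:] = [:a0, a1, a2, a3, a4, 1:]
     \<longleftrightarrow> quintic_coeffs ((a, b, m), p, q) = (a4, a3, a2, a1, a0)"
  by (auto simp: quintic_coeffs_def algebra_simps)

lemma sigma_bullet_5_iff:
  "(\<forall>j\<le>5. sgn (coeff [:a0, a1, a2, a3, a4, 1:] j) = sigma_bullet 5 j)
     \<longleftrightarrow> a4 < 0 \<and> 0 < a3 \<and> 0 < a2 \<and> a1 < 0 \<and> 0 < a0"
  by (simp add: sigma_bullet_def sgn_if numeral_eq_Suc le_Suc_eq all_conj_distrib)

lemma quintic_core_in_params:
  assumes "0 < a" "a < b" "m < 0"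
  shows "((a, b, m), m, m\<^sup>2) \<in> quintic_params"
proof -
  have "quintic_coeffs ((a, b, m), m, m\<^sup>2)
      = (- (a + b), a * b, - (m ^ 3), (a + b) * m ^ 3, - (a * b * m ^ 3))"
    by (simp add: quintic_coeffs_def algebra_simps power2_eq_square power3_eq_cube)
  then have product: "[:-a, 1:] * [:-b, 1:] * [:-m, 1:] * [:m\<^sup>2, m, 1:]
      = [:- (a * b * m ^ 3), (a + b) * m ^ 3, - (m ^ 3), a * b, - (a + b), 1:]"
    by (simp only: quintic_product_eq_iff)
  have "m ^ 3 < 0"
    using assms(3) by (simp add: odd_pos)
  then show ?thesis
    unfolding quintic_params_iff product sigma_bullet_5_iff
    using assms by (simp add: mult_neg_pos mult_pos_neg)
qed

lemma connected_quintic_params: "connected quintic_params"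
  unfolding quintic_params_def
proof (rule connected_quadratic_factor_params)
  have "{(a, b, m). 0 < a \<and> a < b \<and> m < 0}
      = (\<lambda>(a, d, m). (a, a + d, m)) ` ({0::real<..} \<times> {0::real<..} \<times> {..<0::real})"
    by (auto intro!: image_eqI[of _ _ "(a, b - a, m)" for a b m])
  then show "connected {(a::real, b::real, m::real). 0 < a \<and> a < b \<and> m < 0}"
    unfolding split_def
    by (simp only:) (intro connected_continuous_image connected_Times connected_Ioi connected_Iio
      continuous_intros)
  show "continuous_on {(a, b, m). 0 < a \<and> a < b \<and> m < 0} (\<lambda>(a, b, m). (m, m\<^sup>2 :: real))"
    unfolding split_def by (intro continuous_intros)
  show "(r, (\<lambda>(a, b, m). (m, m\<^sup>2)) r) \<in> quadratic_factor_params {(a, b, m). 0 < a \<and> a < b \<and> m < 0}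
      (\<lambda>(a, b, m). [:-a, 1:] * [:-b, 1:] * [:-m, 1:]) 5 (sigma_bullet 5)"
    if "r \<in> {(a, b, m). 0 < a \<and> a < b \<and> m < 0}" for r
    using that quintic_core_in_params unfolding quintic_params_def by (cases r) simp
qed

lemma quintic_params_of_A_set:
  assumes "[:a0, a1, a2, a3, a4, 1:] \<in> A_set 5 (sigma_bullet 5) 2 1"
  obtains a b m p q
  where "((a, b, m), p, q) \<in> quintic_params" "quintic_coeffs ((a, b, m), p, q) = (a4, a3, a2, a1, a0)"
proof -
  have "sigma_bullet 5 0 \<noteq> 0"
    by (simp add: sigma_bullet_def)
  then obtain Z p q where "0 \<notin> Z" and card_pos: "card {r\<in>Z. 0 < r} = 2"
    and card_neg: "card {r\<in>Z. r < 0} = 1" and "p\<^sup>2 < 4 * q"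
    and factored: "[:a0, a1, a2, a3, a4, 1:] = (\<Prod>r\<in>Z. [:-r, 1:]) * [:q, p, 1:]"
    by (rule A_set_factorization[OF assms]) simp
  obtain a b where "a < b" and pos: "{r\<in>Z. 0 < r} = {a, b}"
    using card_2_obtain_ordered[OF card_pos] .
  obtain m where neg: "{r\<in>Z. r < 0} = {m}"
    using card_neg unfolding One_nat_def card_1_singleton_iff by blast
  have "Z = {a, b, m}"
    using nonzero_set_eq_pos_Un_neg[OF \<open>0 \<notin> Z\<close>, unfolded pos neg] by auto
  have "0 < a" "m < 0"
    using pos neg by blast+
  have product: "[:-a, 1:] * [:-b, 1:] * [:-m, 1:] * [:q, p, 1:] = [:a0, a1, a2, a3, a4, 1:]"
    unfolding factored \<open>Z = {a, b, m}\<close> using \<open>a < b\<close> \<open>0 < a\<close> \<open>m < 0\<close>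
    by (subst prod_linear_factors_3) auto
  have "\<forall>j\<le>5. sgn (coeff [:a0, a1, a2, a3, a4, 1:] j) = sigma_bullet 5 j"
    using assms unfolding A_set_def by blast
  then have "((a, b, m), p, q) \<in> quintic_params"
    unfolding quintic_params_iff product
    using \<open>0 < a\<close> \<open>a < b\<close> \<open>m < 0\<close> \<open>p\<^sup>2 < 4 * q\<close> by blast
  moreover have "quintic_coeffs ((a, b, m), p, q) = (a4, a3, a2, a1, a0)"
    using product unfolding quintic_product_eq_iff .
  ultimately show ?thesis
    by (rule that)
qed

lemma A_set_of_quintic_params:
  assumes "((a, b, m), p, q) \<in> quintic_params"
    and "quintic_coeffs ((a, b, m), p, q) = (a4, a3, a2, a1, a0)"
  shows "[:a0, a1, a2, a3, a4, 1:] \<in> A_set 5 (sigma_bullet 5) 2 1"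
proof -
  have "0 < a" "a < b" "m < 0" "p\<^sup>2 < 4 * q"
    and signs: "\<forall>j\<le>5. sgn (coeff ([:-a, 1:] * [:-b, 1:] * [:-m, 1:] * [:q, p, 1:]) j) = sigma_bullet 5 j"
    using assms(1) by (simp_all add: quintic_params_iff)
  then have product: "(\<Prod>r\<in>{a, b, m}. [:-r, 1:]) = [:-a, 1:] * [:-b, 1:] * [:-m, 1:]"
    by (intro prod_linear_factors_3) auto
  have "{r\<in>{a, b, m}. 0 < r} = {a, b}" "{r\<in>{a, b, m}. r < 0} = {m}"
    using \<open>0 < a\<close> \<open>a < b\<close> \<open>m < 0\<close> by auto
  then have "card {r\<in>{a, b, m}. 0 < r} = 2" "card {r\<in>{a, b, m}. r < 0} = 1"
    using \<open>a < b\<close> by simp_all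
  then have "(\<Prod>r\<in>{a, b, m}. [:-r, 1:]) * [:q, p, 1:] \<in> A_set 5 (sigma_bullet 5) 2 1"
    using \<open>0 < a\<close> \<open>a < b\<close> \<open>m < 0\<close> \<open>p\<^sup>2 < 4 * q\<close> signs[folded product]
    by (intro prod_linear_factors_mult_quadratic_in_A_set) auto
  then show ?thesis
    using assms(2) unfolding product quintic_product_eq_iff[symmetric] by simp
qed

lemma quintic_set_eq:
  "{(a4, a3, a2, a1, a0). [:a0, a1, a2, a3, a4, 1:] \<in> A_set 5 (sigma_bullet 5) 2 1}
     = quintic_coeffs ` quintic_params" (is "?S = _")
proof (intro equalityI subsetI)
  fix t assume "t \<in> ?S"
  then obtain a4 a3 a2 a1 a0 where "t = (a4, a3, a2, a1, a0)" "[:a0, a1, a2, a3, a4, 1:] \<in> A_set 5 (sigma_bullet 5) 2 1"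
    by auto
  then show "t \<in> quintic_coeffs ` quintic_params"
    by (metis quintic_params_of_A_set image_eqI)
next
  fix t assume "t \<in> quintic_coeffs ` quintic_params"
  then obtain a b m p q where "((a, b, m), p, q) \<in> quintic_params" "t = quintic_coeffs ((a, b, m), p, q)"
    by auto
  moreover obtain a4 a3 a2 a1 a0 where "quintic_coeffs ((a, b, m), p, q) = (a4, a3, a2, a1, a0)"
    by (cases "quintic_coeffs ((a, b, m), p, q)") auto
  ultimately show "t \<in> ?S"
    using A_set_of_quintic_params by auto
qed

lemma connected_quintic_set:
  "connected {(a4, a3, a2, a1, a0). [:a0, a1, a2, a3, a4, 1:] \<in> A_set 5 (sigma_bullet 5) 2 1}"
  unfolding quintic_set_eq
proof (rule connected_continuous_image)
  show "continuous_on quintic_params quintic_coeffs"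
    unfolding quintic_coeffs_def split_def by (intro continuous_intros)
qed (rule connected_quintic_params)

theorem theorem1:
  shows "connected {(a3::real, a2::real, a1::real, a0::real).
             [:a0, a1, a2, a3, 1:] \<in> A_set 4 (sigma_bullet 4) 2 0}
       \<and> connected {(a4::real, a3::real, a2::real, a1::real, a0::real).
             [:a0, a1, a2, a3, a4, 1:] \<in> A_set 5 (sigma_bullet 5) 2 1}"
  using connected_quartic_set connected_quintic_set by (rule conjI)

end
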